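(* Let $A$ be a sub-tree of $T$, let $I',I''\subseteq\mathcal{I}_A$ be disjoint, and let $\Psi\subseteq V_A^{I'}$ and $\Phi\subseteq V_A^{I''}$. Then for every $x\in[0,d(r_A)]$, $$G(\Psi\cup\Phi,x)=G(\Psi,x)+G\big(\Phi,\;x+(d(r_A)-x)P(\Psi)\big),$$ where $P(\Psi)=0$ if $\Psi=\emptyset$ (note $x+(d(r_A)-x)P(\Psi)\le d(r_A)$).
   Context: Setting. $T$ is a finite tree rooted at $r_T$, node set $V_T$; every edge $e$ has weight $w_e\ge 0$. Every node $v$ has a probability $\pi_v\in(0,1]$ and a prize $p_v\in\mathbb{R}$. $d(v)$ is the total weight of the path from $r_T$ to $v$. A random set $\omega\subseteq V_T$ contains each node $v$ independently with probability $\pi_v$. For $S\subseteq V_T$, $P(S)=1-\prod_{s\in S}(1-\pi_s)$ ($P(\emptyset)=0$). For a node $a$, the sub-tree $A$ rooted at $r_A=a$ consists of $a$ and all its descendants, with node set $V_A$; if $a$ has children $c_1,\dots,c_m$, then $A_i$ ($1\le i\le m$) is the sub-tree rooted at $c_i$, $A_0$ is the sub-tree consisting of the single node $r_A$, $\mathcal{I}_A=\{0,1,\dots,m\}$, and $V_A^I=\bigcup_{i\in I}V_{A_i}$ for $I\subseteq\mathcal{I}_A$. For $Q\subseteq V_T$, $W(Q)$ is the total weight of the edges lying on at least one path from $r_T$ to a node of $Q$. For $S\subseteq V_A$ and $x\le d(r_A)$ the expected profit is $G(S,x)=\sum_{s\in S}p_s\pi_s-\mathbb{E}[W(S\cap\omega)]+x\,P(S)$.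 *)

theory Defs
  imports Complex_Main
begin

text \<open>The edge (v, par v) for v \<noteq> r is identified with its lower
  endpoint v and has weight w v.\<close>

definition is_tree :: "'a set \<Rightarrow> 'a \<Rightarrow> ('a \<Rightarrow> 'a) \<Rightarrow> bool" where
  "is_tree V r par \<longleftrightarrow> finite V \<and> r \<in> V \<and> (\<forall>v\<in>V - {r}. par v \<in> V)
      \<and> (\<forall>v\<in>V. \<exists>n. (par ^^ n) v = r)"

definition path_nodes :: "'a \<Rightarrow> ('a \<Rightarrow> 'a) \<Rightarrow> 'a \<Rightarrow> 'a set" where
  "path_nodes r par v = {(par ^^ k) v | k. k \<le> (LEAST n. (par ^^ n) v = r)}"

definition path_edges :: "'a \<Rightarrow> ('a \<Rightarrow> 'a) \<Rightarrow> 'a \<Rightarrow> 'a set" where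
  "path_edges r par v = path_nodes r par v - {r}"

definition depth :: "'a \<Rightarrow> ('a \<Rightarrow> 'a) \<Rightarrow> ('a \<Rightarrow> real) \<Rightarrow> 'a \<Rightarrow> real" where
  "depth r par w v = (\<Sum>e\<in>path_edges r par v. w e)"

definition Wt :: "'a \<Rightarrow> ('a \<Rightarrow> 'a) \<Rightarrow> ('a \<Rightarrow> real) \<Rightarrow> 'a set \<Rightarrow> real" where
  "Wt r par w Q = (\<Sum>e\<in>(\<Union>v\<in>Q. path_edges r par v). w e)"

definition subtree :: "'a set \<Rightarrow> 'a \<Rightarrow> ('a \<Rightarrow> 'a) \<Rightarrow> 'a \<Rightarrow> 'a set" where
  "subtree V r par a = {u \<in> V. a \<in> path_nodes r par u}"

definition children :: "'a set \<Rightarrow> 'a \<Rightarrow> ('a \<Rightarrow> 'a) \<Rightarrow> 'a \<Rightarrow> 'a set" where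
  "children V r par a = {c \<in> V. c \<noteq> r \<and> par c = a}"

text \<open>Index set I_A: None plays the role of index 0 (the single-node sub-tree A_0),
  Some c for a child c of a (the sub-tree rooted at c).\<close>
definition index_set :: "'a set \<Rightarrow> 'a \<Rightarrow> ('a \<Rightarrow> 'a) \<Rightarrow> 'a \<Rightarrow> 'a option set" where
  "index_set V r par a = insert None (Some ` children V r par a)"

definition part :: "'a set \<Rightarrow> 'a \<Rightarrow> ('a \<Rightarrow> 'a) \<Rightarrow> 'a \<Rightarrow> 'a option \<Rightarrow> 'a set" where
  "part V r par a i = (case i of None \<Rightarrow> {a} | Some c \<Rightarrow> subtree V r par c)"

definition parts :: "'a set \<Rightarrow> 'a \<Rightarrow> ('a \<Rightarrow> 'a) \<Rightarrow> 'a \<Rightarrow> 'a option set \<Rightarrow> 'a set" where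
  "parts V r par a I = (\<Union>i\<in>I. part V r par a i)"

definition Pr :: "('a \<Rightarrow> real) \<Rightarrow> 'a set \<Rightarrow> real" where
  "Pr \<pi> S = 1 - (\<Prod>s\<in>S. 1 - \<pi> s)"

text \<open>Probability that the random set omega (each node v of V independently
  with probability pi v) equals U.\<close>
definition omega_prob :: "'a set \<Rightarrow> ('a \<Rightarrow> real) \<Rightarrow> 'a set \<Rightarrow> real" where
  "omega_prob V \<pi> U = (\<Prod>u\<in>U. \<pi> u) * (\<Prod>u\<in>V - U. 1 - \<pi> u)"

definition EW :: "'a set \<Rightarrow> 'a \<Rightarrow> ('a \<Rightarrow> 'a) \<Rightarrow> ('a \<Rightarrow> real) \<Rightarrow> ('a \<Rightarrow> real) \<Rightarrow> 'a set \<Rightarrow> real" where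
  "EW V r par w \<pi> S = (\<Sum>U\<in>Pow V. omega_prob V \<pi> U * Wt r par w (S \<inter> U))"

definition G :: "'a set \<Rightarrow> 'a \<Rightarrow> ('a \<Rightarrow> 'a) \<Rightarrow> ('a \<Rightarrow> real) \<Rightarrow> ('a \<Rightarrow> real) \<Rightarrow> ('a \<Rightarrow> real)
    \<Rightarrow> 'a set \<Rightarrow> real \<Rightarrow> real" where
  "G V r par w \<pi> p S x = (\<Sum>s\<in>S. p s * \<pi> s) - EW V r par w \<pi> S + x * Pr \<pi> S"

end

theory Submission
  imports Defs
begin

text \<open>Root paths of nodes in different branches at a meet exactly in the root path of a, so
  W((\<Psi> \<union> \<Phi>) \<inter> \<omega>) = W(\<Psi> \<inter> \<omega>) + W(\<Phi> \<inter> \<omega>) - d(a) whenever \<omega> hits both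
  \<Psi> and \<Phi>, and no correction is needed otherwise.  Taking expectations, \<omega> hits both
  with probability P(\<Psi>) P(\<Phi>) by independence, and the identity is then pure algebra,
  using P(\<Psi> \<union> \<Phi>) = 1 - (1 - P(\<Psi>)) (1 - P(\<Phi>)).\<close>

lemma Pr_Un_disjoint:
  assumes "finite S" "finite T" "S \<inter> T = {}"
  shows "Pr \<pi> (S \<union> T) = 1 - (1 - Pr \<pi> S) * (1 - Pr \<pi> T)"
  unfolding Pr_def using prod.union_disjoint[OF assms] by simp

text \<open>Expanding \<Prod>v\<in>V. (\<pi>' v + (1 - \<pi> v)), where \<pi>' vanishes on S and agrees with
  \<pi> elsewhere, over subsets of V.\<close>

lemma sum_omega_prob_avoid:
  assumes fin: "finite V" and S: "S \<subseteq> V"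
  shows "(\<Sum>U\<in>Pow V. omega_prob V \<pi> U * of_bool (S \<inter> U = {})) = (\<Prod>s\<in>S. 1 - \<pi> s)"
proof -
  define \<pi>' where "\<pi>' = (\<lambda>v. if v \<in> S then 0 else \<pi> v)"
  have prod_\<pi>': "(\<Prod>v\<in>U. \<pi>' v) = (\<Prod>v\<in>U. \<pi> v) * of_bool (S \<inter> U = {})"
    if "U \<in> Pow V" for U
  proof (cases "S \<inter> U = {}")
    case True
    then have "(\<Prod>v\<in>U. \<pi>' v) = (\<Prod>v\<in>U. \<pi> v)"
      unfolding \<pi>'_def by (intro prod.cong) auto
    then show ?thesis using True by simp
  next
    case False
    moreover have "finite U" using that fin finite_subset by auto
    ultimately show ?thesis unfolding \<pi>'_def by (auto intro: prod_zero)
  qed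
  have "(\<Prod>s\<in>S. 1 - \<pi> s) = (\<Prod>v\<in>V. if v \<in> S then 1 - \<pi> v else 1)"
    using prod.inter_restrict[OF fin, of "\<lambda>v. 1 - \<pi> v" S] S by (simp add: Int_absorb1)
  also have "\<dots> = (\<Prod>v\<in>V. \<pi>' v + (1 - \<pi> v))"
    unfolding \<pi>'_def by (rule prod.cong) auto
  also have "\<dots> = (\<Sum>U\<in>Pow V. (\<Prod>v\<in>U. \<pi>' v) * (\<Prod>v\<in>V - U. 1 - \<pi> v))"
    by (rule prod_add[OF fin])
  also have "\<dots> = (\<Sum>U\<in>Pow V. omega_prob V \<pi> U * of_bool (S \<inter> U = {}))"
    unfolding omega_prob_def by (rule sum.cong) (simp_all add: prod_\<pi>')
  finally show ?thesis by simp
qed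

lemma sum_omega_prob_hits_both:
  assumes fin: "finite V" and S: "S \<subseteq> V" and T: "T \<subseteq> V" and disj: "S \<inter> T = {}"
  shows "(\<Sum>U\<in>Pow V. omega_prob V \<pi> U * of_bool (S \<inter> U \<noteq> {} \<and> T \<inter> U \<noteq> {}))
    = Pr \<pi> S * Pr \<pi> T"
proof -
  let ?avoid = "\<lambda>X. \<Sum>U\<in>Pow V. omega_prob V \<pi> U * of_bool (X \<inter> U = {})"
  have "of_bool (S \<inter> U \<noteq> {} \<and> T \<inter> U \<noteq> {}) = (1::real)
      - of_bool (S \<inter> U = {}) - of_bool (T \<inter> U = {}) + of_bool ((S \<union> T) \<inter> U = {})" for U
    by (auto simp: Int_Un_distrib2)
  then have "(\<Sum>U\<in>Pow V. omega_prob V \<pi> U * of_bool (S \<inter> U \<noteq> {} \<and> T \<inter> U \<noteq> {}))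
      = ?avoid {} - ?avoid S - ?avoid T + ?avoid (S \<union> T)"
    by (simp only: right_diff_distrib distrib_left mult_1_right sum.distrib sum_subtractf
        Int_empty_left simp_thms of_bool_eq(2))
  also have "\<dots> = 1 - (\<Prod>s\<in>S. 1 - \<pi> s) - (\<Prod>s\<in>T. 1 - \<pi> s) + (\<Prod>s\<in>S \<union> T. 1 - \<pi> s)"
    using S T sum_omega_prob_avoid[OF fin empty_subsetI, of \<pi>]
    by (simp add: sum_omega_prob_avoid[OF fin])
  also have "\<dots> = Pr \<pi> S * Pr \<pi> T"
    using prod.union_disjoint[OF finite_subset[OF S fin] finite_subset[OF T fin] disj]
    unfolding Pr_def by (simp add: algebra_simps)
  finally show ?thesis .
qed

lemma funpow_apply_funpow: "(f ^^ m) ((f ^^ n) x) = (f ^^ (m + n)) x"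
  by (simp add: funpow_add)

definition level :: "'a \<Rightarrow> ('a \<Rightarrow> 'a) \<Rightarrow> 'a \<Rightarrow> nat" where
  "level r par v = (LEAST n. (par ^^ n) v = r)"

lemma path_nodes_level: "path_nodes r par v = {(par ^^ k) v | k. k \<le> level r par v}"
  by (simp add: path_nodes_def level_def)

lemma path_nodes_self: "v \<in> path_nodes r par v"
  unfolding path_nodes_level by (intro CollectI exI[of _ 0]) simp

lemma finite_path_edges: "finite (path_edges r par v)"
proof -
  have "path_nodes r par v = (\<lambda>k. (par ^^ k) v) ` {..level r par v}"
    unfolding path_nodes_level by auto
  then show ?thesis unfolding path_edges_def by simp
qed

context
  fixes V r par
  assumes tree: "is_tree V r par"
begin

lemma funpow_level_eq_root:
  assumes "v \<in> V"
  shows "(par ^^ level r par v) v = r"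
proof -
  obtain n where "(par ^^ n) v = r" using tree assms unfolding is_tree_def by blast
  then show ?thesis unfolding level_def by (rule LeastI)
qed

lemma funpow_less_level_neq_root: "n < level r par v \<Longrightarrow> (par ^^ n) v \<noteq> r"
  unfolding level_def using not_less_Least by blast

lemma funpow_in_tree:
  assumes "v \<in> V"
  shows "k \<le> level r par v \<Longrightarrow> (par ^^ k) v \<in> V"
proof (induction k)
  case 0
  then show ?case using assms by simp
next
  case (Suc k)
  then have "(par ^^ k) v \<in> V" "(par ^^ k) v \<noteq> r"
    using funpow_less_level_neq_root by auto
  then show ?case using tree unfolding is_tree_def by simp
qed

lemma level_funpow:
  assumes "v \<in> V" "k \<le> level r par v"
  shows "level r par ((par ^^ k) v) = level r par v - k"
  unfolding level_def[of r par "(par ^^ k) v"]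
proof (rule Least_equality)
  show "(par ^^ (level r par v - k)) ((par ^^ k) v) = r"
    using funpow_level_eq_root[OF assms(1)] assms(2) by (simp add: funpow_apply_funpow)
next
  fix y assume "(par ^^ y) ((par ^^ k) v) = r"
  then have "(par ^^ (y + k)) v = r" by (simp add: funpow_add)
  then show "level r par v - k \<le> y"
    using funpow_less_level_neq_root[of "y + k" v] by linarith
qed

lemma path_nodes_subset: "v \<in> V \<Longrightarrow> path_nodes r par v \<subseteq> V"
  using funpow_in_tree unfolding path_nodes_level by auto

lemma level_le_if_path_nodes:
  "v \<in> V \<Longrightarrow> z \<in> path_nodes r par v \<Longrightarrow> level r par z \<le> level r par v"
  using level_funpow unfolding path_nodes_level by auto

lemma path_nodes_trans:
  assumes "v \<in> V" "z \<in> path_nodes r par v"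
  shows "path_nodes r par z \<subseteq> path_nodes r par v"
proof
  fix y assume "y \<in> path_nodes r par z"
  then obtain j where j: "y = (par ^^ j) z" "j \<le> level r par z"
    unfolding path_nodes_level by auto
  obtain k where k: "z = (par ^^ k) v" "k \<le> level r par v"
    using assms(2) unfolding path_nodes_level by auto
  have "y = (par ^^ (j + k)) v" "j + k \<le> level r par v"
    using j k level_funpow[OF assms(1) k(2)] by (simp_all add: funpow_add)
  then show "y \<in> path_nodes r par v" unfolding path_nodes_level by blast
qed

lemma path_nodes_lower:
  assumes "v \<in> V" "y \<in> path_nodes r par v" "z \<in> path_nodes r par v"
    and "level r par y \<le> level r par z"
  shows "y \<in> path_nodes r par z"
proof -
  obtain i where i: "y = (par ^^ i) v" "i \<le> level r par v"
    using assms(2) unfolding path_nodes_level by auto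
  obtain k where k: "z = (par ^^ k) v" "k \<le> level r par v"
    using assms(3) unfolding path_nodes_level by auto
  have lz: "level r par z = level r par v - k"
    using level_funpow[OF assms(1) k(2)] k by simp
  have "k \<le> i"
    using assms(4) level_funpow[OF assms(1) i(2)] lz i k by simp
  then have "y = (par ^^ (i - k)) z" "i - k \<le> level r par z"
    using i k lz by (simp_all add: funpow_apply_funpow)
  then show ?thesis unfolding path_nodes_level by blast
qed

lemma path_nodes_level_inj:
  assumes "v \<in> V" "y \<in> path_nodes r par v" "y' \<in> path_nodes r par v"
    and "level r par y = level r par y'"
  shows "y = y'"
proof -
  obtain i where i: "y = (par ^^ i) v" "i \<le> level r par v"
    using assms(2) unfolding path_nodes_level by auto
  obtain j where j: "y' = (par ^^ j) v" "j \<le> level r par v"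
    using assms(3) unfolding path_nodes_level by auto
  have "level r par v - i = level r par v - j"
    using assms(4) level_funpow[OF assms(1) i(2)] level_funpow[OF assms(1) j(2)] i j by simp
  then have "i = j" using i j by simp
  then show ?thesis using i j by simp
qed

lemma
  assumes "c \<in> children V r par a"
  shows level_child: "level r par c = Suc (level r par a)"
    and parent_in_path_nodes_child: "a \<in> path_nodes r par c"
proof -
  have c: "c \<in> V" "c \<noteq> r" "par c = a" using assms unfolding children_def by auto
  have "level r par c \<noteq> 0" using funpow_level_eq_root[OF c(1)] c(2) by (metis funpow_0)
  then have "1 \<le> level r par c" by simp
  then show "level r par c = Suc (level r par a)"
    using level_funpow[OF c(1), of 1] c(3) by simp
  show "a \<in> path_nodes r par c"
    unfolding path_nodes_level using \<open>1 \<le> level r par c\<close> c(3)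
    by (intro CollectI exI[of _ 1]) simp
qed

lemma mem_parts_cases:
  assumes "I \<subseteq> index_set V r par a" "u \<in> parts V r par a I"
  obtains "u = a" "None \<in> I"
  | c where "u \<noteq> a" "Some c \<in> I" "c \<in> children V r par a" "u \<in> V" "c \<in> path_nodes r par u"
proof -
  obtain i where i: "i \<in> I" "u \<in> part V r par a i" using assms(2) unfolding parts_def by auto
  show thesis
  proof (cases i)
    case None
    then show thesis using that(1) i unfolding part_def by auto
  next
    case (Some c)
    have c: "c \<in> children V r par a" using i(1) assms(1) Some unfolding index_set_def by auto
    have u: "u \<in> V" "c \<in> path_nodes r par u"
      using i(2) Some unfolding part_def subtree_def by auto
    have "u \<noteq> a"
      using level_le_if_path_nodes[OF u] level_child[OF c] by auto
    then show thesis using that(2) i(1) Some c u by blast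
  qed
qed

lemma parts_subset_subtree:
  assumes "a \<in> V" "I \<subseteq> index_set V r par a"
  shows "parts V r par a I \<subseteq> subtree V r par a"
proof
  fix u assume "u \<in> parts V r par a I"
  with assms(2) show "u \<in> subtree V r par a"
  proof (cases rule: mem_parts_cases)
    case (2 c)
    then show ?thesis using path_nodes_trans parent_in_path_nodes_child
      unfolding subtree_def by blast
  qed (use assms(1) path_nodes_self in \<open>auto simp: subtree_def\<close>)
qed

lemma parts_subset: "a \<in> V \<Longrightarrow> I \<subseteq> index_set V r par a \<Longrightarrow> parts V r par a I \<subseteq> V"
  using parts_subset_subtree unfolding subtree_def by blast

lemma finite_parts: "a \<in> V \<Longrightarrow> I \<subseteq> index_set V r par a \<Longrightarrow> finite (parts V r par a I)"
  using finite_subset[OF parts_subset] tree unfolding is_tree_def by blast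

text \<open>Both children are the node of level level a + 1 on the root path of u.\<close>

lemma path_nodes_children_eq:
  assumes "c \<in> children V r par a" "c' \<in> children V r par a" "u \<in> V"
    and "c \<in> path_nodes r par u" "c' \<in> path_nodes r par u"
  shows "c = c'"
  using path_nodes_level_inj assms level_child by metis

lemma parts_disjoint:
  assumes "I1 \<subseteq> index_set V r par a" "I2 \<subseteq> index_set V r par a" "I1 \<inter> I2 = {}"
  shows "parts V r par a I1 \<inter> parts V r par a I2 = {}"
proof (rule ccontr)
  assume "parts V r par a I1 \<inter> parts V r par a I2 \<noteq> {}"
  then obtain u where u: "u \<in> parts V r par a I1" "u \<in> parts V r par a I2" by blast
  from assms(1) u(1) show False
  proof (cases rule: mem_parts_cases)
    case 1
    from assms(2) u(2) show False
      by (cases rule: mem_parts_cases) (use 1 assms(3) in auto)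
  next
    case (2 c)
    from assms(2) u(2) show False
    proof (cases rule: mem_parts_cases)
      case (2 c')
      then have "c = c'" using \<open>c \<in> children V r par a\<close> \<open>c \<in> path_nodes r par u\<close>
        by (intro path_nodes_children_eq) auto
      then show False using 2 \<open>Some c \<in> I1\<close> assms(3) by auto
    qed (use 2 in auto)
  qed
qed

lemma path_nodes_parts_Int:
  assumes a: "a \<in> V"
    and I: "I1 \<subseteq> index_set V r par a" "I2 \<subseteq> index_set V r par a" "I1 \<inter> I2 = {}"
    and u: "u \<in> parts V r par a I1" and u': "u' \<in> parts V r par a I2"
  shows "path_nodes r par u \<inter> path_nodes r par u' = path_nodes r par a"
proof
  have "u \<in> subtree V r par a" "u' \<in> subtree V r par a"
    using parts_subset_subtree[OF a] I u u' by blast+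
  then show "path_nodes r par a \<subseteq> path_nodes r par u \<inter> path_nodes r par u'"
    using path_nodes_trans unfolding subtree_def by blast
next
  show "path_nodes r par u \<inter> path_nodes r par u' \<subseteq> path_nodes r par a"
  proof
    fix z assume z: "z \<in> path_nodes r par u \<inter> path_nodes r par u'"
    have uV: "u \<in> V" "u' \<in> V" using parts_subset[OF a] I u u' by blast+
    show "z \<in> path_nodes r par a"
    proof (cases "level r par z \<le> level r par a")
      case True
      have "a \<in> path_nodes r par u"
        using parts_subset_subtree[OF a I(1)] u unfolding subtree_def by blast
      then show ?thesis using path_nodes_lower[OF uV(1) _ _ True] z by blast
    next
      case False
      show ?thesis using I(1) u
      proof (cases rule: mem_parts_cases)
        case 1
        then show ?thesis using z by blast
      next
        case (2 c)
        show ?thesis using I(2) u'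
        proof (cases rule: mem_parts_cases)
          case 1
          then show ?thesis using z by blast
        next
          case (2 c')
          have "level r par c \<le> level r par z" "level r par c' \<le> level r par z"
            using False level_child \<open>c \<in> children V r par a\<close> \<open>c' \<in> children V r par a\<close>
            by auto
          then have "c \<in> path_nodes r par z" "c' \<in> path_nodes r par z"
            using path_nodes_lower uV z \<open>c \<in> path_nodes r par u\<close> \<open>c' \<in> path_nodes r par u'\<close>
            by blast+
          then have "c = c'"
            using path_nodes_children_eq \<open>c \<in> children V r par a\<close> \<open>c' \<in> children V r par a\<close>
              path_nodes_subset[OF uV(1)] z by blast
          then show ?thesis using \<open>Some c \<in> I1\<close> \<open>Some c' \<in> I2\<close> I(3) by blast
        qed
      qed
    qed
  qed
qed

lemma Wt_Un_parts:
  assumes a: "a \<in> V"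
    and I: "I1 \<subseteq> index_set V r par a" "I2 \<subseteq> index_set V r par a" "I1 \<inter> I2 = {}"
    and A: "A \<subseteq> parts V r par a I1" and B: "B \<subseteq> parts V r par a I2"
  shows "Wt r par w (A \<union> B) = Wt r par w A + Wt r par w B
          - (if A \<noteq> {} \<and> B \<noteq> {} then depth r par w a else 0)"
proof -
  have fin: "finite A" "finite B"
    using finite_subset[OF A finite_parts[OF a I(1)]] finite_subset[OF B finite_parts[OF a I(2)]] .
  define EA where "EA = (\<Union>v\<in>A. path_edges r par v)"
  define EB where "EB = (\<Union>v\<in>B. path_edges r par v)"
  have "Wt r par w (A \<union> B) = sum w EA + sum w EB - sum w (EA \<inter> EB)"
    unfolding Wt_def EA_def EB_def UN_Un
    by (rule sum_Un) (simp_all add: fin finite_path_edges)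
  moreover have "EA \<inter> EB = (\<Union>v\<in>A. \<Union>v'\<in>B. path_edges r par a)"
  proof -
    have "path_edges r par v \<inter> path_edges r par v' = path_edges r par a"
      if "v \<in> A" "v' \<in> B" for v v'
      using path_nodes_parts_Int[OF a I, of v v'] that A B unfolding path_edges_def by blast
    then show ?thesis unfolding EA_def EB_def Int_UN_distrib2 by simp
  qed
  ultimately show ?thesis unfolding Wt_def depth_def EA_def EB_def by simp
qed

lemma EW_Un_parts:
  assumes a: "a \<in> V"
    and I: "I1 \<subseteq> index_set V r par a" "I2 \<subseteq> index_set V r par a" "I1 \<inter> I2 = {}"
    and A: "A \<subseteq> parts V r par a I1" and B: "B \<subseteq> parts V r par a I2"
  shows "EW V r par w \<pi> (A \<union> B)
    = EW V r par w \<pi> A + EW V r par w \<pi> B - depth r par w a * (Pr \<pi> A * Pr \<pi> B)"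
proof -
  have fin: "finite V" using tree unfolding is_tree_def by simp
  have AV: "A \<subseteq> V" and BV: "B \<subseteq> V"
    using A B parts_subset[OF a I(1)] parts_subset[OF a I(2)] by auto
  have disj: "A \<inter> B = {}"
    using A B parts_disjoint[OF I] by auto
  let ?hits_both = "\<lambda>U. of_bool (A \<inter> U \<noteq> {} \<and> B \<inter> U \<noteq> {})"
  have Wt_split: "Wt r par w ((A \<union> B) \<inter> U)
      = Wt r par w (A \<inter> U) + Wt r par w (B \<inter> U) - depth r par w a * ?hits_both U" for U
    using Wt_Un_parts[OF a I subset_trans[OF Int_lower1 A] subset_trans[OF Int_lower1 B]]
    by (simp add: Int_Un_distrib2)
  have "EW V r par w \<pi> (A \<union> B) = (\<Sum>U\<in>Pow V. omega_prob V \<pi> U *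
      (Wt r par w (A \<inter> U) + Wt r par w (B \<inter> U) - depth r par w a * ?hits_both U))"
    unfolding EW_def Wt_split ..
  also have "\<dots> = EW V r par w \<pi> A + EW V r par w \<pi> B
      - depth r par w a * (\<Sum>U\<in>Pow V. omega_prob V \<pi> U * ?hits_both U)"
    unfolding EW_def sum_distrib_left sum.distrib[symmetric] sum_subtractf[symmetric]
    by (rule sum.cong) (simp_all only: right_diff_distrib distrib_left mult.left_commute)
  also have "\<dots> = EW V r par w \<pi> A + EW V r par w \<pi> B - depth r par w a * (Pr \<pi> A * Pr \<pi> B)"
    unfolding sum_omega_prob_hits_both[OF fin AV BV disj] ..
  finally show ?thesis .
qed

end

theorem proposition6:
  fixes V :: "'a set" and r :: 'a and par :: "'a \<Rightarrow> 'a"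
    and w \<pi> p :: "'a \<Rightarrow> real" and a :: 'a and I1 I2 :: "'a option set"
    and \<Psi> \<Phi> :: "'a set" and x :: real
  assumes tree: "is_tree V r par"
    and w_nonneg: "\<forall>v\<in>V - {r}. w v \<ge> 0"
    and pi_range: "\<forall>v\<in>V. 0 < \<pi> v \<and> \<pi> v \<le> 1"
    and a_in: "a \<in> V"
    and I1_sub: "I1 \<subseteq> index_set V r par a"
    and I2_sub: "I2 \<subseteq> index_set V r par a"
    and disj: "I1 \<inter> I2 = {}"
    and Psi_sub: "\<Psi> \<subseteq> parts V r par a I1"
    and Phi_sub: "\<Phi> \<subseteq> parts V r par a I2"
    and x_range: "0 \<le> x" "x \<le> depth r par w a"
  shows "G V r par w \<pi> p (\<Psi> \<union> \<Phi>) x =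
         G V r par w \<pi> p \<Psi> x
         + G V r par w \<pi> p \<Phi> (x + (depth r par w a - x) * Pr \<pi> \<Psi>)"
proof -
  have fin: "finite \<Psi>" "finite \<Phi>"
    using finite_subset[OF Psi_sub finite_parts[OF tree a_in I1_sub]]
      finite_subset[OF Phi_sub finite_parts[OF tree a_in I2_sub]] .
  have disjoint: "\<Psi> \<inter> \<Phi> = {}"
    using parts_disjoint[OF tree I1_sub I2_sub disj] Psi_sub Phi_sub by auto
  show ?thesis
    unfolding G_def sum.union_disjoint[OF fin disjoint] Pr_Un_disjoint[OF fin disjoint]
      EW_Un_parts[OF tree a_in I1_sub I2_sub disj Psi_sub Phi_sub]
    by (simp add: algebra_simps)
qed

end
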